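(* Let $M$ be an $\widehat{\mathrm{FI}}$-module. If for some $N$ the module $\Sigma^NM$ is an $\mathrm{FI}$-module with generation degree $\le d$, then $\delta(M)\le d$.
   Context: $\widehat{\mathrm S}_n=\{(\sigma,d)\in\mathrm S_n\times\mathbb Z: d\text{ odd}\iff\operatorname{sgn}\sigma=-1\}$ ($n\ge2$; trivial for $n=0,1$). $\widehat{\mathrm{FI}}$: objects $n\in\mathbb N$, $\widehat{\mathrm{FI}}(n,m)=\widehat{\mathrm S}_m/i_2(\widehat{\mathrm S}_{m-n})$, composition $([s],[t])\mapsto[t\,i_1(s)]$, with a monoidal structure $n\oplus m=n+m$ (morphisms combined using $i_1,i_2$ and a braiding from $\mathrm{Br}_n\to\widehat{\mathrm S}_n$). $\Sigma M$ is the restriction of $M$ along $-\oplus1$; the morphism $0\to 1$ gives $M\to\Sigma M$; $\Delta M$ is its cokernel. $M$ is torsion if each $x\in M_n$ satisfies $f_*(x)=0$ for some morphism $f:n\to m$. The stable degree $\delta(M)$ is the least $N\ge-1$ with $\Delta^{N+1}M$ torsion. An $\mathrm{FI}$-module here is an $\widehat{\mathrm{FI}}$-module factoring through $\widehat{\mathrm{FI}}\to\mathrm{FI}$; generation degree $\le d$ means being a quotient of a module induced from degrees $\le d$. *)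

theory Defs
  imports "HOL-Combinatorics.Permutations" "HOL-Library.Extended_Real"
begin

text \<open>Elements of \<open>S_n \<times> \<int>\<close>: a permutation of \<open>{0..<n}\<close> (identity elsewhere) and an integer.\<close>
type_synonym shat = "(nat \<Rightarrow> nat) \<times> int"

definition Shat :: "nat \<Rightarrow> shat set" where
  "Shat n = (if n \<le> 1 then {(id, 0)}
             else {(\<sigma>, d). \<sigma> permutes {..<n} \<and> (odd d \<longleftrightarrow> sign \<sigma> = -1)})"

definition smul :: "shat \<Rightarrow> shat \<Rightarrow> shat" where
  "smul s t = (fst s \<circ> fst t, snd s + snd t)"

definition sone :: shat where "sone = (id, 0)"

text \<open>\<open>i_1 : S^_n \<rightarrow> S^_(n+m)\<close> is the identity on our representation (permutations of
  \<open>{..<n}\<close> are permutations of \<open>{..<n+m}\<close>); \<open>i_2 n : S^_k \<rightarrow> S^_(n+k)\<close> shifts by \<open>n\<close>.\<close>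
definition i1 :: "shat \<Rightarrow> shat" where "i1 s = s"

definition i2 :: "nat \<Rightarrow> shat \<Rightarrow> shat" where
  "i2 n s = ((\<lambda>i. if i < n then i else n + fst s (i - n)), snd s)"

text \<open>A representative in \<open>S^_(m+1)\<close> of \<open>id_n \<oplus> braiding\<close> used for \<open>f \<oplus> id_1\<close>, \<open>f : n \<rightarrow> m\<close>:
  the cycle sending \<open>n \<mapsto> m\<close> and \<open>i \<mapsto> i-1\<close> for \<open>n < i \<le> m\<close>, lifted with \<open>m-n\<close> crossings.\<close>
definition cyc :: "nat \<Rightarrow> nat \<Rightarrow> shat" where
  "cyc n m = ((\<lambda>i. if n \<le> i \<and> i \<le> m then (if i = n then m else i - 1) else i), int (m - n))"

text \<open>An \<open>FI^\<close>-module with values in abelian groups: \<open>carr n\<close> is the group \<open>M_n\<close>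
 (a subgroup of the ambient abelian group \<open>'a\<close>), and \<open>act n m s\<close> is \<open>[s]_* : M_n \<rightarrow> M_m\<close>
 for the morphism \<open>[s] \<in> FI^(n,m) = S^_m / i_2(S^_(m-n))\<close> represented by \<open>s \<in> S^_m\<close>.\<close>
record 'a fhmod =
  carr :: "nat \<Rightarrow> 'a set"
  act :: "nat \<Rightarrow> nat \<Rightarrow> shat \<Rightarrow> 'a \<Rightarrow> 'a"

definition is_subgroup :: "'a::ab_group_add set \<Rightarrow> bool" where
  "is_subgroup H \<longleftrightarrow> 0 \<in> H \<and> (\<forall>a\<in>H. \<forall>b\<in>H. a - b \<in> H)"

definition fihat_module :: "'a::ab_group_add fhmod \<Rightarrow> bool" where
  "fihat_module M \<longleftrightarrow>
     (\<forall>n. is_subgroup (carr M n)) \<and>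
     (\<forall>n m s. n \<le> m \<longrightarrow> s \<in> Shat m \<longrightarrow>
        (\<forall>x\<in>carr M n. act M n m s x \<in> carr M m) \<and>
        (\<forall>x\<in>carr M n. \<forall>y\<in>carr M n. act M n m s (x + y) = act M n m s x + act M n m s y) \<and>
        (\<forall>u\<in>Shat (m - n). \<forall>x\<in>carr M n. act M n m (smul s (i2 n u)) x = act M n m s x)) \<and>
     (\<forall>n. \<forall>x\<in>carr M n. act M n n sone x = x) \<and>
     (\<forall>n m k s t. n \<le> m \<longrightarrow> m \<le> k \<longrightarrow> s \<in> Shat m \<longrightarrow> t \<in> Shat k \<longrightarrow>
        (\<forall>x\<in>carr M n. act M m k t (act M n m s x) = act M n k (smul t (i1 s)) x))"

text \<open>Subquotients: a pair \<open>(M, K)\<close> stands for the module \<open>n \<mapsto> M_n / K_n\<close>.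
  All constructions (\<open>\<Sigma>\<close>, \<open>\<Delta>\<close>) are performed on such pairs; an honest module \<open>M\<close> is \<open>(M, 0)\<close>.\<close>
type_synonym 'a sqmod = "'a fhmod \<times> (nat \<Rightarrow> 'a set)"

definition as_sq :: "'a::ab_group_add fhmod \<Rightarrow> 'a sqmod" where
  "as_sq M = (M, \<lambda>_. {0})"

text \<open>\<open>\<Sigma>\<close>: restriction along \<open>- \<oplus> 1\<close>; \<open>[s] \<oplus> id_1 = [i_1(s) \<cdot> cyc n m]\<close>.\<close>
definition Sig_mod :: "'a fhmod \<Rightarrow> 'a fhmod" where
  "Sig_mod M = \<lparr> carr = (\<lambda>n. carr M (Suc n)),
                 act = (\<lambda>n m s. act M (Suc n) (Suc m) (smul (i1 s) (cyc n m))) \<rparr>"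

definition Sig :: "'a sqmod \<Rightarrow> 'a sqmod" where
  "Sig P = (Sig_mod (fst P), (\<lambda>n. snd P (Suc n)))"

text \<open>\<open>\<Delta>\<close>: cokernel of \<open>M \<rightarrow> \<Sigma>M\<close>, induced by \<open>id_n \<oplus> (0 \<rightarrow> 1) = [id] \<in> FI^(n, n+1)\<close>.\<close>
definition Del :: "'a::ab_group_add sqmod \<Rightarrow> 'a sqmod" where
  "Del P = (Sig_mod (fst P),
            (\<lambda>n. {a + act (fst P) n (Suc n) sone b | a b. a \<in> snd P (Suc n) \<and> b \<in> carr (fst P) n}))"

definition torsion :: "'a::ab_group_add sqmod \<Rightarrow> bool" where
  "torsion P \<longleftrightarrow> (\<forall>n. \<forall>x\<in>carr (fst P) n. \<exists>m\<ge>n. \<exists>s\<in>Shat m. act (fst P) n m s x \<in> snd P m)"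

definition stable_degree :: "'a::ab_group_add sqmod \<Rightarrow> ereal" where
  "stable_degree P = Inf {ereal (of_int N) | N. N \<ge> -1 \<and> torsion ((Del ^^ nat (N + 1)) P)}"

text \<open>FI-modules: the action of \<open>[s] \<in> FI^(n,m)\<close> factors through the functor \<open>FI^ \<rightarrow> FI\<close>,
  \<open>[s] \<mapsto>\<close> the injection \<open>fst s|_{..<n}\<close>.\<close>
definition fi_module :: "'a::ab_group_add sqmod \<Rightarrow> bool" where
  "fi_module P \<longleftrightarrow> (\<exists>G. \<forall>n m s. n \<le> m \<longrightarrow> s \<in> Shat m \<longrightarrow>
      (\<forall>x\<in>carr (fst P) n. act (fst P) n m s x - G n m (restrict (fst s) {..<n}) x \<in> snd P m))"

definition add_span :: "'a::ab_group_add set \<Rightarrow> 'a set" where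
  "add_span S = \<Inter>{H. is_subgroup H \<and> S \<subseteq> H}"

definition gen_deg_le :: "'a::ab_group_add sqmod \<Rightarrow> int \<Rightarrow> bool" where
  "gen_deg_le P d \<longleftrightarrow> (\<forall>n. carr (fst P) n \<subseteq>
      add_span ({act (fst P) k n s x | k s x. int k \<le> d \<and> k \<le> n \<and> s \<in> Shat n \<and> x \<in> carr (fst P) k}
                \<union> snd P n))"

end

theory Submission
  imports Defs
begin

text \<open>
  Write \<open>(\<Delta>\<^sup>k M)\<^sub>p\<close> as \<open>M\<^sub>p\<^sub>+\<^sub>k\<close> modulo a subgroup. By induction on \<open>k\<close>, this subgroup
  contains every element pushed forward from some \<open>M\<^sub>a\<close> along a map whose image misses one of
  the top \<open>k\<close> points \<open>p, \<dots>, p + k - 1\<close>: if it misses \<open>p\<close>, the element factors through the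
  structure map \<open>\<Sigma>\<^sup>k\<^sup>-\<^sup>1 M \<rightarrow> \<Sigma>\<^sup>k M\<close> in degree \<open>p\<close>; otherwise it already vanishes in
  \<open>(\<Delta>\<^sup>k\<^sup>-\<^sup>1 M)\<^sub>p\<^sub>+\<^sub>1\<close>.

  Now let \<open>k = d + 1\<close> and \<open>p \<ge> N + 2\<close>, and let \<open>\<beta>\<close> shift \<open>{..<p + k}\<close> down by \<open>k\<close>; it acts
  as an automorphism of \<open>M\<^sub>p\<^sub>+\<^sub>k\<close>. This group is \<open>(\<Sigma>\<^sup>N M)\<^sub>p\<^sub>+\<^sub>k\<^sub>-\<^sub>N\<close>, spanned by elements
  pushed forward from degrees \<open>a + N\<close> with \<open>a \<le> d\<close> along maps sending the \<open>N\<close> suspension points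
  to the top. After \<open>\<beta>\<close> these points lie below \<open>p\<close>, so the map meets the top \<open>k\<close> points at
  most \<open>a < k\<close> times and the generator vanishes. Hence \<open>\<Delta>\<^sup>k M\<close> vanishes in all degrees
  \<open>\<ge> N + 2\<close>, and in particular it is torsion.
\<close>

section \<open>Signed permutations\<close>

text \<open>\<open>Shat m\<close> without its exception for \<open>m \<le> 1\<close>; unlike \<open>Shat\<close> it is monotone in \<open>m\<close>.\<close>
definition signed_perm :: "nat \<Rightarrow> shat \<Rightarrow> bool" where
  "signed_perm m s \<longleftrightarrow> fst s permutes {..<m} \<and> (odd (snd s) \<longleftrightarrow> \<not> evenperm (fst s))"

definition sinv :: "shat \<Rightarrow> shat" where
  "sinv s = (inv (fst s), - snd s)"

lemma Shat_imp_signed_perm: "s \<in> Shat m \<Longrightarrow> signed_perm m s"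
  by (auto simp: Shat_def signed_perm_def sign_def split: if_splits)

lemma signed_perm_imp_Shat: "2 \<le> m \<Longrightarrow> signed_perm m s \<Longrightarrow> s \<in> Shat m"
  by (cases s) (auto simp: Shat_def signed_perm_def sign_def)

lemma sone_in_Shat: "sone \<in> Shat m"
  by (auto simp: Shat_def sone_def)

lemma signed_perm_mono: "m \<le> m' \<Longrightarrow> signed_perm m s \<Longrightarrow> signed_perm m' s"
  unfolding signed_perm_def using permutes_subset[of "fst s" "{..<m}" "{..<m'}"] by auto

lemma signed_perm_sone: "signed_perm m sone"
  by (simp add: signed_perm_def sone_def)

lemma signed_perm_transpose:
  "a < m \<Longrightarrow> b < m \<Longrightarrow> signed_perm m (transpose a b, if a = b then 0 else 1)"
  by (auto simp: signed_perm_def permutes_swap_id evenperm_swap)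

lemma signed_perm_imp_permutation: "signed_perm m s \<Longrightarrow> permutation (fst s)"
  unfolding signed_perm_def using permutes_imp_permutation by blast

lemma signed_perm_smul: "signed_perm m s \<Longrightarrow> signed_perm m t \<Longrightarrow> signed_perm m (smul s t)"
  using signed_perm_imp_permutation[of m s] signed_perm_imp_permutation[of m t]
  unfolding signed_perm_def smul_def by (auto simp: permutes_compose evenperm_comp)

lemma signed_perm_sinv: "signed_perm m s \<Longrightarrow> signed_perm m (sinv s)"
  using signed_perm_imp_permutation[of m s]
  unfolding signed_perm_def sinv_def by (auto simp: permutes_inv evenperm_inv)

lemma smul_sinv: "signed_perm m s \<Longrightarrow> smul s (sinv s) = sone"
  by (auto simp: signed_perm_def sinv_def smul_def sone_def permutes_inv_o)

lemma smul_sinv_cancel_left: "signed_perm m s \<Longrightarrow> smul s (smul (sinv s) t) = t"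
  by (cases t) (auto simp: signed_perm_def sinv_def smul_def o_assoc permutes_inv_o)

lemma signed_perm_fixing_last:
  assumes "signed_perm (Suc m) u" and "fst u m = m"
  shows "signed_perm m u"
proof -
  have "\<forall>x\<in>{..<Suc m} - {..<m}. fst u x = x"
    using assms(2) by (auto simp: less_Suc_eq)
  then have "fst u permutes {..<m}"
    using assms(1) permutes_superset[of "fst u" "{..<Suc m}" "{..<m}"] by (simp add: signed_perm_def)
  then show ?thesis
    using assms(1) by (simp add: signed_perm_def)
qed

lemma signed_perm_smul_power: "signed_perm m c \<Longrightarrow> signed_perm m ((smul c ^^ j) sone)"
  by (induction j) (auto simp: signed_perm_sone signed_perm_smul)

lemma fst_smul_power: "fst ((smul c ^^ j) sone) = fst c ^^ j"
  by (induction j) (auto simp: smul_def sone_def)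

lemma cyc_self: "cyc n n = sone"
  by (auto simp: cyc_def sone_def fun_eq_iff)

lemma cyc_Suc: "n \<le> m \<Longrightarrow> cyc n (Suc m) = smul (transpose m (Suc m), 1) (cyc n m)"
  by (auto simp: cyc_def smul_def fun_eq_iff transpose_def)

lemma signed_perm_cyc: "n \<le> m \<Longrightarrow> signed_perm (Suc m) (cyc n m)"
proof (induction m rule: dec_induct)
  case base
  then show ?case by (simp add: cyc_self signed_perm_sone)
next
  case (step m)
  have "signed_perm (Suc (Suc m)) (transpose m (Suc m), 1)"
    using signed_perm_transpose[of m "Suc (Suc m)" "Suc m"] by simp
  moreover have "signed_perm (Suc (Suc m)) (cyc n m)"
    using signed_perm_mono[OF _ step.IH] by simp
  ultimately show ?case
    using step.hyps by (simp add: cyc_Suc signed_perm_smul)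
qed

lemma cyc_0_power: "j \<le> y \<Longrightarrow> y \<le> m \<Longrightarrow> (fst (cyc 0 m) ^^ j) y = y - j"
  by (induction j) (auto simp: cyc_def)

lemma obtain_shift_down:
  assumes "1 \<le> T"
  obtains \<beta> where "signed_perm T \<beta>" and "\<And>y. k \<le> y \<Longrightarrow> y < T \<Longrightarrow> fst \<beta> y = y - k"
proof
  show "signed_perm T ((smul (cyc 0 (T - 1)) ^^ k) sone)"
    using signed_perm_smul_power signed_perm_cyc[of 0 "T - 1"] assms by simp
  show "fst ((smul (cyc 0 (T - 1)) ^^ k) sone) y = y - k" if "k \<le> y" "y < T" for y
    using that by (simp add: fst_smul_power cyc_0_power)
qed

section \<open>Iterated suspension and derivative\<close>

fun oplus_id :: "nat \<Rightarrow> nat \<Rightarrow> nat \<Rightarrow> shat \<Rightarrow> shat" where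
  "oplus_id 0 n m s = s"
| "oplus_id (Suc j) n m s = oplus_id j (Suc n) (Suc m) (smul s (cyc n m))"

lemma carr_Sig_mod_pow: "carr ((Sig_mod ^^ j) M) n = carr M (n + j)"
  by (induction j arbitrary: n) (auto simp: Sig_mod_def)

lemma act_Sig_mod_pow: "act ((Sig_mod ^^ j) M) n m s x = act M (n + j) (m + j) (oplus_id j n m s) x"
  by (induction j arbitrary: n m s) (auto simp: Sig_mod_def i1_def)

lemma signed_perm_oplus_id:
  "n \<le> m \<Longrightarrow> signed_perm m s \<Longrightarrow> signed_perm (m + j) (oplus_id j n m s)"
proof (induction j arbitrary: n m s)
  case 0
  then show ?case by simp
next
  case (Suc j)
  have "signed_perm (Suc m) (smul s (cyc n m))"
    using Suc.prems signed_perm_cyc signed_perm_mono[of m "Suc m" s] signed_perm_smul by simp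
  from Suc.IH[OF _ this] Suc.prems show ?case by simp
qed

lemma oplus_id_in_Shat:
  assumes "n \<le> m" and "s \<in> Shat m"
  shows "oplus_id j n m s \<in> Shat (m + j)"
proof (cases "2 \<le> m + j")
  case True
  then show ?thesis
    using signed_perm_oplus_id[OF assms(1) Shat_imp_signed_perm[OF assms(2)]] signed_perm_imp_Shat
    by blast
next
  case False
  then consider "j = 0" | "j = 1" "m = 0" by linarith
  then show ?thesis
  proof cases
    case 1
    then show ?thesis using assms by simp
  next
    case 2
    then have "n = 0" "s = sone" using assms by (auto simp: Shat_def sone_def)
    then show ?thesis using 2 by (simp add: cyc_self smul_def sone_def Shat_def)
  qed
qed

lemma oplus_id_below: "x < n \<Longrightarrow> fst (oplus_id j n m s) x = fst s x"
  by (induction j arbitrary: n m s) (auto simp: smul_def cyc_def)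

lemma oplus_id_tail:
  assumes "n \<le> m" and "\<forall>y\<ge>m. fst s y = y" and "n \<le> x" and "x < n + j"
  shows "m \<le> fst (oplus_id j n m s) x \<and> fst (oplus_id j n m s) x < m + j"
  using assms
proof (induction j arbitrary: n m s)
  case 0
  then show ?case by simp
next
  case (Suc j)
  show ?case
  proof (cases "x = n")
    case True
    then have "fst (oplus_id (Suc j) n m s) x = fst s (fst (cyc n m) n)"
      using oplus_id_below[of n "Suc n" j "Suc m"] by (simp add: smul_def)
    also have "\<dots> = m" using Suc.prems by (simp add: cyc_def)
    finally show ?thesis by simp
  next
    case False
    have "\<forall>y\<ge>Suc m. fst (smul s (cyc n m)) y = y"
      using Suc.prems by (auto simp: smul_def cyc_def)
    then show ?thesis using Suc.IH[of "Suc n" "Suc m" "smul s (cyc n m)"] Suc.prems False by simp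
  qed
qed

lemma oplus_id_last: "fst (oplus_id j n (Suc n) s) (n + j) = fst s n"
proof (induction j arbitrary: n s)
  case 0
  then show ?case by simp
next
  case (Suc j)
  have "fst (cyc n (Suc n)) (Suc n) = n" by (simp add: cyc_def)
  then show ?case using Suc.IH[of "Suc n" "smul s (cyc n (Suc n))"] by (simp add: smul_def)
qed

text \<open>The \<open>N\<close> points added by \<open>\<Sigma>\<^sup>N\<close> land in \<open>[q, q + N)\<close> and are shifted below \<open>p\<close>, so only
  the \<open>a < k\<close> images of \<open>{..<a}\<close> can meet the \<open>k\<close> points \<open>[p, p + k)\<close>.\<close>
lemma shifted_oplus_id_avoids_top:
  assumes a: "a < k" "a \<le> q" and kq: "k \<le> q" and qN: "q + N = p + k" and s: "s \<in> Shat q"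
    and shift: "\<And>y. k \<le> y \<Longrightarrow> y < p + k \<Longrightarrow> fst \<beta> y = y - k"
  obtains i where "p \<le> i" and "i < p + k"
    and "\<forall>x<a + N. fst (smul \<beta> (oplus_id N a q s)) x \<noteq> i"
proof -
  define S where "S = fst \<beta> ` fst s ` {..<a}"
  have "finite S" and "card S < card {p..<p + k}"
    using a card_image_le[of "{..<a}" "fst s"] card_image_le[of "fst s ` {..<a}" "fst \<beta>"]
    by (auto simp: S_def)
  then obtain i where i: "p \<le> i" "i < p + k" "i \<notin> S"
    by (metis atLeastLessThan_iff card_mono not_le subsetI)
  have s_fixes: "\<forall>y\<ge>q. fst s y = y"
    using Shat_imp_signed_perm[OF s] unfolding signed_perm_def by (auto intro: permutes_not_in)
  have "fst (smul \<beta> (oplus_id N a q s)) x \<noteq> i" if x: "x < a + N" for x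
  proof (cases "x < a")
    case True
    then have "fst (smul \<beta> (oplus_id N a q s)) x \<in> S"
      by (simp add: S_def smul_def oplus_id_below)
    then show ?thesis using i(3) by auto
  next
    case False
    define v where "v = fst (oplus_id N a q s) x"
    have v: "q \<le> v" "v < q + N"
      using oplus_id_tail[OF a(2) s_fixes, of x N] x False by (simp_all add: v_def)
    then have "fst (smul \<beta> (oplus_id N a q s)) x = v - k"
      using shift[of v] kq qN by (simp add: smul_def v_def)
    moreover have "v - k < p"
      using v kq qN by linarith
    ultimately show ?thesis using i(1) by simp
  qed
  then show ?thesis using i that by blast
qed

lemma fst_as_sq: "fst (as_sq M) = M"
  by (simp add: as_sq_def)

lemma Sig_pow_as_sq: "(Sig ^^ N) (as_sq M) = ((Sig_mod ^^ N) M, \<lambda>_. {0})"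
  by (induction N) (simp_all add: as_sq_def Sig_def)

lemma fst_Del_pow: "fst ((Del ^^ j) P) = (Sig_mod ^^ j) (fst P)"
  by (induction j) (simp_all add: Del_def)

lemma snd_Del_pow_Suc:
  "snd ((Del ^^ Suc j) P) n =
     {a + act ((Sig_mod ^^ j) (fst P)) n (Suc n) sone b | a b.
        a \<in> snd ((Del ^^ j) P) (Suc n) \<and> b \<in> carr ((Sig_mod ^^ j) (fst P)) n}"
  by (simp add: Del_def fst_Del_pow)

lemma snd_Del_pow_SucI:
  "a \<in> snd ((Del ^^ j) P) (Suc n) \<Longrightarrow> b \<in> carr ((Sig_mod ^^ j) (fst P)) n \<Longrightarrow>
     a + act ((Sig_mod ^^ j) (fst P)) n (Suc n) sone b \<in> snd ((Del ^^ Suc j) P) n"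
  unfolding snd_Del_pow_Suc by blast

section \<open>Additive subgroups\<close>

lemma is_subgroup_zero: "is_subgroup H \<Longrightarrow> 0 \<in> H"
  by (simp add: is_subgroup_def)

lemma is_subgroup_diff: "is_subgroup H \<Longrightarrow> a \<in> H \<Longrightarrow> b \<in> H \<Longrightarrow> a - b \<in> H"
  by (simp add: is_subgroup_def)

lemma additive_on_zero:
  fixes f :: "'a::ab_group_add \<Rightarrow> 'b::ab_group_add"
  assumes "is_subgroup B" and "\<forall>x\<in>B. \<forall>y\<in>B. f (x + y) = f x + f y"
  shows "f 0 = 0"
  using assms(2) is_subgroup_zero[OF assms(1)] by (metis add_cancel_left_right add_0)

lemma additive_on_diff:
  fixes f :: "'a::ab_group_add \<Rightarrow> 'b::ab_group_add"
  assumes "is_subgroup B" and "\<forall>x\<in>B. \<forall>y\<in>B. f (x + y) = f x + f y" and "x \<in> B" and "y \<in> B"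
  shows "f (x - y) = f x - f y"
proof -
  have "f (x - y + y) = f (x - y) + f y"
    using assms is_subgroup_diff by blast
  then show ?thesis by (simp add: algebra_simps)
qed

lemma is_subgroup_sum_image:
  assumes A: "is_subgroup A" and B: "is_subgroup B"
    and f: "\<forall>x\<in>B. \<forall>y\<in>B. f (x + y) = f x + f y"
  shows "is_subgroup {a + f b | a b. a \<in> A \<and> b \<in> B}"
  unfolding is_subgroup_def
proof (intro conjI ballI)
  show "0 \<in> {a + f b |a b. a \<in> A \<and> b \<in> B}"
    using additive_on_zero[OF B f] is_subgroup_zero[OF A] is_subgroup_zero[OF B] by force
next
  fix u v
  assume "u \<in> {a + f b |a b. a \<in> A \<and> b \<in> B}" and "v \<in> {a + f b |a b. a \<in> A \<and> b \<in> B}"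
  then obtain a1 b1 a2 b2 where uv: "u = a1 + f b1" "v = a2 + f b2"
    and mem: "a1 \<in> A" "a2 \<in> A" "b1 \<in> B" "b2 \<in> B"
    by blast
  have "u - v = (a1 - a2) + f (b1 - b2)"
    using additive_on_diff[OF B f mem(3,4)] uv by (simp add: algebra_simps)
  moreover have "a1 - a2 \<in> A" "b1 - b2 \<in> B"
    using mem is_subgroup_diff A B by auto
  ultimately show "u - v \<in> {a + f b |a b. a \<in> A \<and> b \<in> B}" by blast
qed

lemma is_subgroup_preimage:
  assumes K: "is_subgroup K" and B: "is_subgroup B"
    and f: "\<forall>x\<in>B. \<forall>y\<in>B. f (x + y) = f x + f y"
  shows "is_subgroup {w \<in> B. f w \<in> K}"
  unfolding is_subgroup_def
proof (intro conjI ballI)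
  show "0 \<in> {w \<in> B. f w \<in> K}"
    using additive_on_zero[OF B f] is_subgroup_zero[OF K] is_subgroup_zero[OF B] by simp
next
  fix u v
  assume "u \<in> {w \<in> B. f w \<in> K}" and "v \<in> {w \<in> B. f w \<in> K}"
  then show "u - v \<in> {w \<in> B. f w \<in> K}"
    using additive_on_diff[OF B f] is_subgroup_diff[OF K] is_subgroup_diff[OF B] by simp
qed

lemma add_span_least: "is_subgroup H \<Longrightarrow> S \<subseteq> H \<Longrightarrow> add_span S \<subseteq> H"
  unfolding add_span_def by blast

lemma gen_deg_le_carr_subset:
  assumes gen: "gen_deg_le P d" and H: "is_subgroup H" and "snd P n \<subseteq> H"
    and generators: "\<And>a s y. int a \<le> d \<Longrightarrow> a \<le> n \<Longrightarrow> s \<in> Shat n \<Longrightarrow> y \<in> carr (fst P) a \<Longrightarrow>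
      act (fst P) a n s y \<in> H"
  shows "carr (fst P) n \<subseteq> H"
proof -
  have "add_span ({act (fst P) a n s y | a s y.
      int a \<le> d \<and> a \<le> n \<and> s \<in> Shat n \<and> y \<in> carr (fst P) a} \<union> snd P n) \<subseteq> H"
    using assms by (intro add_span_least) auto
  then show ?thesis
    using gen unfolding gen_deg_le_def by blast
qed

section \<open>Vanishing of iterated derivatives\<close>

context
  fixes M :: "'a::ab_group_add fhmod"
  assumes M: "fihat_module M"
begin

lemma is_subgroup_carr: "is_subgroup (carr M n)"
  using M by (simp add: fihat_module_def)

lemma act_closed: "n \<le> m \<Longrightarrow> s \<in> Shat m \<Longrightarrow> x \<in> carr M n \<Longrightarrow> act M n m s x \<in> carr M m"
  using M[unfolded fihat_module_def, THEN conjunct2, THEN conjunct1, rule_format, of n m s] by blast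

lemma act_additive:
  "n \<le> m \<Longrightarrow> s \<in> Shat m \<Longrightarrow>
     \<forall>x\<in>carr M n. \<forall>y\<in>carr M n. act M n m s (x + y) = act M n m s x + act M n m s y"
  using M[unfolded fihat_module_def, THEN conjunct2, THEN conjunct1, rule_format, of n m s] by blast

lemma act_smul_i2:
  "n \<le> m \<Longrightarrow> s \<in> Shat m \<Longrightarrow> u \<in> Shat (m - n) \<Longrightarrow> x \<in> carr M n \<Longrightarrow>
     act M n m (smul s (i2 n u)) x = act M n m s x"
  using M[unfolded fihat_module_def, THEN conjunct2, THEN conjunct1, rule_format, of n m s] by blast

lemma act_sone: "x \<in> carr M n \<Longrightarrow> act M n n sone x = x"
  using M[unfolded fihat_module_def, THEN conjunct2, THEN conjunct2, THEN conjunct1] by blast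

lemma act_act:
  "n \<le> m \<Longrightarrow> m \<le> k \<Longrightarrow> s \<in> Shat m \<Longrightarrow> t \<in> Shat k \<Longrightarrow> x \<in> carr M n \<Longrightarrow>
     act M m k t (act M n m s x) = act M n k (smul t s) x"
  using M[unfolded fihat_module_def, THEN conjunct2, THEN conjunct2, THEN conjunct2, rule_format,
      of n m k s t] by (simp add: i1_def)

lemma act_sinv_cancel:
  assumes "2 \<le> m" and "signed_perm m s" and "x \<in> carr M m"
  shows "act M m m s (act M m m (sinv s) x) = x"
proof -
  have "s \<in> Shat m" and "sinv s \<in> Shat m"
    using assms signed_perm_sinv signed_perm_imp_Shat by blast+
  then show ?thesis
    using act_act[OF order_refl order_refl] act_sone smul_sinv[OF assms(2)] assms(3) by simp
qed

lemma act_zero: "n \<le> m \<Longrightarrow> s \<in> Shat m \<Longrightarrow> act M n m s 0 = 0"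
  using additive_on_zero[OF is_subgroup_carr act_additive] by blast

lemma act_Sig_mod_pow_sone_additive:
  "\<forall>x\<in>carr ((Sig_mod ^^ j) M) n. \<forall>y\<in>carr ((Sig_mod ^^ j) M) n.
     act ((Sig_mod ^^ j) M) n (Suc n) sone (x + y) =
       act ((Sig_mod ^^ j) M) n (Suc n) sone x + act ((Sig_mod ^^ j) M) n (Suc n) sone y"
  using act_additive[of "n + j" "Suc n + j" "oplus_id j n (Suc n) sone"]
    oplus_id_in_Shat[of n "Suc n" sone j] sone_in_Shat
  by (simp add: carr_Sig_mod_pow act_Sig_mod_pow)

lemma is_subgroup_snd_Del_pow: "is_subgroup (snd ((Del ^^ j) (as_sq M)) n)"
proof (induction j arbitrary: n)
  case 0
  then show ?case by (simp add: as_sq_def is_subgroup_def)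
next
  case (Suc j)
  show ?case
    unfolding snd_Del_pow_Suc fst_as_sq
    by (rule is_subgroup_sum_image[OF Suc.IH _ act_Sig_mod_pow_sone_additive])
      (simp add: carr_Sig_mod_pow is_subgroup_carr)
qed

text \<open>Precomposing with \<open>i2 a w\<close>, which permutes only the points \<open>\<ge> a\<close>, does not change the
  action on \<open>M_a\<close>; a transposition of this form moves the preimage of \<open>v\<close> to the last point.\<close>
lemma obtain_rep_with_last_value:
  assumes t: "t \<in> Shat T" and aT: "a + 2 \<le> T" and y: "y \<in> carr M a"
    and vT: "v < T" and avoid: "\<forall>x<a. fst t x \<noteq> v"
  obtains t' where "t' \<in> Shat T" and "fst t' (T - 1) = v" and "act M a T t' y = act M a T t y"
proof -
  have tperm: "fst t permutes {..<T}"
    using Shat_imp_signed_perm[OF t] by (simp add: signed_perm_def)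
  define c where "c = inv (fst t) v"
  have tc: "fst t c = v"
    using permutes_inverses(1)[OF tperm] by (simp add: c_def)
  have cT: "c < T"
    using permutes_in_image[OF permutes_inv[OF tperm], of v] vT by (simp add: c_def)
  have ac: "a \<le> c"
    using avoid tc not_le by blast
  define w where "w = (transpose (T - 1 - a) (c - a), if T - 1 - a = c - a then 0 else 1::int)"
  have w: "w \<in> Shat (T - a)"
    unfolding w_def using aT cT ac by (intro signed_perm_imp_Shat signed_perm_transpose) auto
  have i2w: "i2 a w = (transpose (T - 1) c, if T - 1 = c then 0 else 1)"
    using aT cT ac unfolding i2_def w_def by (auto simp: fun_eq_iff transpose_def)
  show ?thesis
  proof
    show "smul t (i2 a w) \<in> Shat T"
      unfolding i2w using aT cT
      by (intro signed_perm_imp_Shat signed_perm_smul Shat_imp_signed_perm[OF t]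
          signed_perm_transpose) auto
    show "fst (smul t (i2 a w)) (T - 1) = v"
      unfolding i2w smul_def using tc by simp
    show "act M a T (smul t (i2 a w)) y = act M a T t y"
      using act_smul_i2[OF _ t w y] aT by simp
  qed
qed

text \<open>The structure map \<open>\<Sigma>\<^sup>j M \<rightarrow> \<Sigma>\<^sup>j\<^sup>+\<^sup>1 M\<close> in degree \<open>n\<close> is the action of
  \<open>E = oplus_id j n (Suc n) sone\<close>, which sends the last point to \<open>n\<close>; so a representative
  sending the last point to \<open>n\<close> is \<open>E\<close> times one fixing the last point.\<close>
lemma act_avoiding_factors_through_Sig:
  assumes n2: "2 \<le> n" and t: "t \<in> Shat (Suc (n + j))" and a: "a + 2 \<le> Suc (n + j)"
    and y: "y \<in> carr M a" and avoid: "\<forall>x<a. fst t x \<noteq> n"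
  shows "\<exists>b\<in>carr ((Sig_mod ^^ j) M) n.
           act M a (Suc (n + j)) t y = act ((Sig_mod ^^ j) M) n (Suc n) sone b"
proof -
  define T where "T = Suc (n + j)"
  define E where "E = oplus_id j n (Suc n) sone"
  have E: "E \<in> Shat T"
    using oplus_id_in_Shat[of n "Suc n" sone j] sone_in_Shat by (simp add: E_def T_def)
  have gE: "signed_perm T E"
    using Shat_imp_signed_perm[OF E] .
  have ET: "fst E (T - 1) = n"
    using oplus_id_last[of j n sone] by (simp add: E_def T_def sone_def)
  obtain t' where t': "t' \<in> Shat T" "fst t' (T - 1) = n" "act M a T t' y = act M a T t y"
    using obtain_rep_with_last_value[of t T a y n] t a y avoid by (auto simp: T_def)
  define u where "u = smul (sinv E) t'"
  have gu: "signed_perm T u"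
    unfolding u_def using signed_perm_smul signed_perm_sinv gE Shat_imp_signed_perm[OF t'(1)] by blast
  have "fst u (n + j) = n + j"
    using t'(2) ET permutes_inverses(2)[of "fst E" "{..<T}", of "T - 1"] gE
    by (simp add: u_def smul_def sinv_def signed_perm_def T_def)
  then have u: "u \<in> Shat (n + j)"
    using gu n2 signed_perm_fixing_last[of "n + j" u] by (intro signed_perm_imp_Shat) (auto simp: T_def)
  have Eu: "smul E u = t'"
    unfolding u_def using smul_sinv_cancel_left[OF gE] .
  have b: "act M a (n + j) u y \<in> carr ((Sig_mod ^^ j) M) n"
    unfolding carr_Sig_mod_pow using act_closed[OF _ u y] a by simp
  have "act M a T t y = act M (n + j) T E (act M a (n + j) u y)"
    using act_act[of a "n + j" T u E y] a u E y Eu t'(3) by (simp add: T_def)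
  also have "\<dots> = act ((Sig_mod ^^ j) M) n (Suc n) sone (act M a (n + j) u y)"
    by (simp add: act_Sig_mod_pow E_def T_def)
  finally show ?thesis
    using b unfolding T_def by blast
qed

lemma act_avoiding_in_snd_Del_pow:
  assumes "2 \<le> n" and "t \<in> Shat (n + j)" and "a + 2 \<le> n + j" and "y \<in> carr M a"
    and "n \<le> i" and "i < n + j" and "\<forall>x<a. fst t x \<noteq> i"
  shows "act M a (n + j) t y \<in> snd ((Del ^^ j) (as_sq M)) n"
  using assms
proof (induction j arbitrary: n i)
  case 0
  then show ?case by simp
next
  case (Suc j)
  show ?case
  proof (cases "i = n")
    case True
    then obtain b where b: "b \<in> carr ((Sig_mod ^^ j) M) n"
      and eq: "act M a (n + Suc j) t y = 0 + act ((Sig_mod ^^ j) M) n (Suc n) sone b"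
      using act_avoiding_factors_through_Sig[of n t j a y] Suc.prems by auto
    have "0 \<in> snd ((Del ^^ j) (as_sq M)) (Suc n)"
      using is_subgroup_zero[OF is_subgroup_snd_Del_pow] .
    from snd_Del_pow_SucI[OF this, of b] b show ?thesis
      unfolding eq fst_as_sq .
  next
    case False
    then have "act M a (Suc n + j) t y \<in> snd ((Del ^^ j) (as_sq M)) (Suc n)"
      using Suc.IH[of "Suc n" i] Suc.prems by simp
    moreover have "0 \<in> carr ((Sig_mod ^^ j) M) n"
      using is_subgroup_zero[OF is_subgroup_carr] by (simp add: carr_Sig_mod_pow)
    moreover have "act ((Sig_mod ^^ j) M) n (Suc n) sone 0 = 0"
      using act_zero[of "n + j" "Suc n + j"] oplus_id_in_Shat[of n "Suc n" sone j] sone_in_Shat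
      by (simp add: act_Sig_mod_pow)
    ultimately show ?thesis
      using snd_Del_pow_SucI[of _ j "as_sq M" n 0] by (simp add: fst_as_sq)
  qed
qed

lemma shifted_generator_in_snd_Del_pow:
  assumes p: "N + 2 \<le> p" and qN: "q + N = p + k" and kq: "k \<le> q" and a: "a < k" "a \<le> q"
    and s: "s \<in> Shat q" and y: "y \<in> carr ((Sig_mod ^^ N) M) a"
    and \<beta>: "\<beta> \<in> Shat (p + k)" and shift: "\<And>y. k \<le> y \<Longrightarrow> y < p + k \<Longrightarrow> fst \<beta> y = y - k"
  shows "act M (p + k) (p + k) \<beta> (act ((Sig_mod ^^ N) M) a q s y) \<in> snd ((Del ^^ k) (as_sq M)) p"
proof -
  define t where "t = oplus_id N a q s"
  have t: "t \<in> Shat (p + k)"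
    using oplus_id_in_Shat[OF a(2) s, of N] qN by (simp add: t_def)
  have y': "y \<in> carr M (a + N)"
    using y by (simp add: carr_Sig_mod_pow)
  obtain i where i: "p \<le> i" "i < p + k" "\<forall>x<a + N. fst (smul \<beta> t) x \<noteq> i"
    using shifted_oplus_id_avoids_top[OF a kq qN s shift] unfolding t_def by blast
  have "act M (p + k) (p + k) \<beta> (act ((Sig_mod ^^ N) M) a q s y) = act M (a + N) (p + k) (smul \<beta> t) y"
    using act_act[OF _ order_refl t \<beta> y'] a qN by (simp add: act_Sig_mod_pow t_def)
  also have "\<dots> \<in> snd ((Del ^^ k) (as_sq M)) p"
  proof (rule act_avoiding_in_snd_Del_pow[OF _ _ _ y' i])
    show "smul \<beta> t \<in> Shat (p + k)"
      using p signed_perm_smul[OF Shat_imp_signed_perm[OF \<beta>] Shat_imp_signed_perm[OF t]]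
      by (intro signed_perm_imp_Shat) auto
  qed (use p a in auto)
  finally show ?thesis .
qed

lemma carr_subset_snd_Del_pow:
  assumes gen: "gen_deg_le ((Sig ^^ N) (as_sq M)) d" and k: "int k = d + 1" and p: "N + 2 \<le> p"
  shows "carr M (p + k) \<subseteq> snd ((Del ^^ k) (as_sq M)) p"
proof
  define T where "T = p + k"
  define q where "q = T - N"
  have qN: "q + N = T" and kq: "k \<le> q"
    using p by (auto simp: q_def T_def)
  obtain \<beta> where g\<beta>: "signed_perm T \<beta>" and shift: "\<And>y. k \<le> y \<Longrightarrow> y < T \<Longrightarrow> fst \<beta> y = y - k"
    using obtain_shift_down[of T k] p by (auto simp: T_def)
  have \<beta>: "\<beta> \<in> Shat T" and \<beta>': "sinv \<beta> \<in> Shat T"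
    using p g\<beta> signed_perm_sinv[OF g\<beta>] by (auto simp: T_def intro!: signed_perm_imp_Shat)
  define K where "K = snd ((Del ^^ k) (as_sq M)) p"
  define H where "H = {w \<in> carr M T. act M T T \<beta> w \<in> K}"
  have H: "is_subgroup H"
    unfolding H_def K_def
    by (rule is_subgroup_preimage[OF is_subgroup_snd_Del_pow is_subgroup_carr
          act_additive[OF order_refl \<beta>]])
  have "carr ((Sig_mod ^^ N) M) q \<subseteq> H"
  proof (rule gen_deg_le_carr_subset[OF gen H, unfolded Sig_pow_as_sq fst_conv snd_conv])
    show "{0} \<subseteq> H"
      using is_subgroup_zero[OF H] by simp
    fix a s y
    assume "int a \<le> d" and a: "a \<le> q" and s: "s \<in> Shat q" and y: "y \<in> carr ((Sig_mod ^^ N) M) a"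
    then have "a < k"
      using k by linarith
    have "act ((Sig_mod ^^ N) M) a q s y \<in> carr M T"
      unfolding act_Sig_mod_pow
      using act_closed[OF _ oplus_id_in_Shat[OF a s, of N] y[unfolded carr_Sig_mod_pow]] a qN
      by simp
    moreover have "act M T T \<beta> (act ((Sig_mod ^^ N) M) a q s y) \<in> K"
      unfolding K_def T_def
      by (rule shifted_generator_in_snd_Del_pow[OF p _ kq \<open>a < k\<close> a s y])
        (use qN \<beta> shift in \<open>auto simp: T_def\<close>)
    ultimately show "act ((Sig_mod ^^ N) M) a q s y \<in> H"
      by (simp add: H_def)
  qed
  fix z assume z: "z \<in> carr M (p + k)"
  have "act M T T (sinv \<beta>) z \<in> H"
    using \<open>carr ((Sig_mod ^^ N) M) q \<subseteq> H\<close> act_closed[OF order_refl \<beta>'] z qN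
    by (auto simp: carr_Sig_mod_pow T_def)
  then have "act M T T \<beta> (act M T T (sinv \<beta>) z) \<in> K"
    by (simp add: H_def)
  moreover have "act M T T \<beta> (act M T T (sinv \<beta>) z) = z"
    using act_sinv_cancel[OF _ g\<beta>] z p by (simp add: T_def)
  ultimately show "z \<in> snd ((Del ^^ k) (as_sq M)) p"
    by (simp add: K_def)
qed

lemma torsion_Del_pow:
  assumes gen: "gen_deg_le ((Sig ^^ N) (as_sq M)) d" and k: "int k = d + 1"
  shows "torsion ((Del ^^ k) (as_sq M))"
  unfolding torsion_def fst_Del_pow fst_as_sq
proof (intro allI ballI)
  fix n x assume x: "x \<in> carr ((Sig_mod ^^ k) M) n"
  define p where "p = n + N + 2"
  have "oplus_id k n p sone \<in> Shat (p + k)"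
    using oplus_id_in_Shat[of n p sone k] sone_in_Shat by (simp add: p_def)
  then have "act ((Sig_mod ^^ k) M) n p sone x \<in> carr M (p + k)"
    using act_closed[OF _ _ x[unfolded carr_Sig_mod_pow]] by (simp add: act_Sig_mod_pow p_def)
  then have "act ((Sig_mod ^^ k) M) n p sone x \<in> snd ((Del ^^ k) (as_sq M)) p"
    using carr_subset_snd_Del_pow[OF gen k, of p] by (auto simp: p_def)
  then show "\<exists>m\<ge>n. \<exists>s\<in>Shat m. act ((Sig_mod ^^ k) M) n m s x \<in> snd ((Del ^^ k) (as_sq M)) m"
    by (intro exI[of _ p] conjI bexI[of _ sone]) (auto simp: p_def sone_in_Shat)
qed

end

theorem mainTheorem12:
  fixes M :: "'a::ab_group_add fhmod" and N :: nat and d :: int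
  assumes "fihat_module M"
    and "-1 \<le> d"
    and "fi_module ((Sig ^^ N) (as_sq M))"
    and "gen_deg_le ((Sig ^^ N) (as_sq M)) d"
  shows "stable_degree (as_sq M) \<le> ereal (of_int d)"
proof -
  have "torsion ((Del ^^ nat (d + 1)) (as_sq M))"
    using torsion_Del_pow[OF assms(1) assms(4)] assms(2) by simp
  then show ?thesis
    unfolding stable_degree_def using assms(2) by (intro Inf_lower) blast
qed

end
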